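(* The generating function of the number of compositions of $n$ with parts in $\{1,2\}$ having at least one water cell is \[ \sum_{n \ge 0} \Bigl(\sum_{k \ge 1} w(n,k)\Bigr) q^n = \frac{q^5}{(1 - q)^2 (1 - q^2) (1 - q - q^2)}. \]
   Context: A composition of $n \ge 0$ is a finite sequence $(c_1,\dots,c_t)$ of positive integers with $c_1+\cdots+c_t=n$; the empty composition is the unique composition of $0$. Let $C_{12}(n)$ be the set of compositions of $n$ all of whose parts lie in $\{1,2\}$. The number of water cells of a composition $(c_1,\dots,c_t)$ is $\sum_{i=1}^{t} \max\bigl(0, \min(\max_{j \le i} c_j, \max_{j \ge i} c_j) - c_i\bigr)$ (the number of unit squares that would hold water poured over its bargraph, in which column $i$ has height $c_i$). For $n,k \ge 0$, $W(n,k)$ is the set of compositions in $C_{12}(n)$ with exactly $k$ water cells and $w(n,k)=|W(n,k)|$. *)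

theory Defs
  imports "HOL-Computational_Algebra.Formal_Power_Series" "HOL-Analysis.Infinite_Sum"
begin

definition C12 :: "nat \<Rightarrow> nat list set" where
  "C12 n = {cs. set cs \<subseteq> {1, 2} \<and> sum_list cs = n}"

text \<open>Number of water cells; column i (0-based) holds
  max 0 (min (max of c_0..c_i) (max of c_i..c_(t-1)) - c_i); nat subtraction truncates at 0.\<close>
definition water :: "nat list \<Rightarrow> nat" where
  "water cs = (\<Sum>i<length cs.
      min (Max (set (take (Suc i) cs))) (Max (set (drop i cs))) - cs ! i)"

definition W :: "nat \<Rightarrow> nat \<Rightarrow> nat list set" where
  "W n k = {cs \<in> C12 n. water cs = k}"

definition w :: "nat \<Rightarrow> nat \<Rightarrow> nat" where
  "w n k = card (W n k)"

end

theory Submission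
  imports Defs
begin

text \<open>Split off the first part. A leading 1 is never higher than what follows, so it neither
  holds water nor changes the water of the rest. A leading 2 is a wall at least as high as
  everything after it, so the rest then holds its walled water: one cell for every 1 that is
  followed somewhere by a 2. The walled water vanishes exactly on the compositions \<open>2\<^sup>a 1\<^sup>b\<close>.
  Writing \<open>F n\<close> for the number of all compositions of \<open>n\<close> (a Fibonacci number),
  \<open>Z n\<close> for those without walled water and \<open>G n\<close> for those holding water, this gives
  \<open>Z (n + 2) = Z n + 1\<close> and \<open>G (n + 2) = G (n + 1) + F n - Z n\<close>, that is
  \<open>G(q) (1 - q) = q\<^sup>2 (1 / (1 - q - q\<^sup>2) - 1 / ((1 - q) (1 - q\<^sup>2)))\<close>.\<close>

unbundle fps_syntax

lemma infsum_card_fibres: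
  assumes "finite A"
  shows "(\<Sum>\<^sub>\<infinity>k\<in>K. real (card {x \<in> A. f x = k})) = real (card {x \<in> A. f x \<in> K})"
proof -
  have fibre_empty: "{x \<in> A. f x = k} = {}" if "k \<notin> f ` A" for k
    using that by auto
  have "(\<Sum>\<^sub>\<infinity>k\<in>K. real (card {x \<in> A. f x = k})) =
      (\<Sum>\<^sub>\<infinity>k\<in>K \<inter> f ` A. real (card {x \<in> A. f x = k}))"
    by (intro infsum_cong_neutral) (auto simp: fibre_empty)
  also have "\<dots> = real (\<Sum>k\<in>K \<inter> f ` A. card {x \<in> A. f x = k})"
    using assms by simp
  also have "(\<Sum>k\<in>K \<inter> f ` A. card {x \<in> A. f x = k}) = card (\<Union>k\<in>K \<inter> f ` A. {x \<in> A. f x = k})"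
    using assms by (subst card_UN_disjoint) auto
  also have "(\<Union>k\<in>K \<inter> f ` A. {x \<in> A. f x = k}) = {x \<in> A. f x \<in> K}"
    by auto
  finally show ?thesis .
qed

lemma fps_eq_Suc_SucI:
  fixes f g :: "'a::zero fps"
  assumes "f $ 0 = g $ 0" "f $ 1 = g $ 1" "\<And>n. f $ Suc (Suc n) = g $ Suc (Suc n)"
  shows "f = g"
proof (rule fps_ext)
  fix n show "f $ n = g $ n"
  proof (cases n)
    case (Suc m)
    then show ?thesis using assms by (cases m) simp_all
  qed (use assms in simp)
qed

definition walled_water :: "nat list \<Rightarrow> nat" where
  "walled_water xs = (\<Sum>i<length xs. Max (set (drop i xs)) - xs ! i)"

lemma walled_water_Nil [simp]: "walled_water [] = 0"
  by (simp add: walled_water_def)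

lemma walled_water_Cons:
  "walled_water (x # xs) = (Max (insert x (set xs)) - x) + walled_water xs"
  unfolding walled_water_def length_Cons sum.lessThan_Suc_shift by simp

lemma walled_water_const:
  "set xs \<subseteq> {c} \<Longrightarrow> walled_water xs = 0"
  by (induction xs) (auto simp: walled_water_Cons)

lemma water_Cons:
  "water (x # xs) = (\<Sum>i<length xs.
     min (Max (insert x (set (take (Suc i) xs)))) (Max (set (drop i xs))) - xs ! i)"
  unfolding water_def length_Cons sum.lessThan_Suc_shift by simp

lemma water_Cons_lower:
  assumes "\<forall>y\<in>set xs. x \<le> y"
  shows "water (x # xs) = water xs"
proof -
  have "Max (insert x (set (take (Suc i) xs))) = Max (set (take (Suc i) xs))"
    if "i < length xs" for i
  proof -
    have "hd xs \<in> set (take (Suc i) xs)" "x \<le> hd xs"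
      using that assms by (cases xs; simp)+
    then show ?thesis
      by (metis List.finite_set Max_insert empty_iff max.absorb2 Max_ge order_trans)
  qed
  then show ?thesis unfolding water_Cons by (simp add: water_def)
qed

lemma water_Cons_upper:
  assumes "\<forall>y\<in>set xs. y \<le> x"
  shows "water (x # xs) = walled_water xs"
proof -
  have "Max (insert x (set (take (Suc i) xs))) = x" "Max (set (drop i xs)) \<le> x"
    if "i < length xs" for i
    using that assms by (auto intro!: Max_eqI dest: in_set_takeD in_set_dropD)
  then show ?thesis unfolding water_Cons by (simp add: walled_water_def)
qed

lemma length_le_sum_list_12: "set xs \<subseteq> {1, 2} \<Longrightarrow> length xs \<le> sum_list xs"
  by (induction xs) auto

lemma finite_C12: "finite (C12 n)"
proof (rule finite_subset)
  show "C12 n \<subseteq> {xs. set xs \<subseteq> {1, 2} \<and> length xs \<le> n}"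
    unfolding C12_def using length_le_sum_list_12 by fastforce
qed (rule finite_lists_length_le, simp)

lemma Cons_in_C12_iff: "x # xs \<in> C12 n \<longleftrightarrow> x \<in> {1, 2} \<and> x \<le> n \<and> xs \<in> C12 (n - x)"
  unfolding C12_def by auto

lemma C12_0: "C12 0 = {[]}"
proof -
  have "xs = []" if "xs \<in> C12 0" for xs
    using that by (cases xs) (auto simp: C12_def)
  then show ?thesis by (auto simp: C12_def)
qed

lemma C12_1: "C12 (Suc 0) = {[1]}"
proof -
  have "xs = [1]" if "xs \<in> C12 (Suc 0)" for xs
  proof (cases xs)
    case Nil
    with that show ?thesis by (simp add: C12_def)
  next
    case (Cons x ys)
    with that show ?thesis by (auto simp: Cons_in_C12_iff C12_0)
  qed
  then show ?thesis by (auto simp: C12_def)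
qed

lemma C12_Suc_Suc: "C12 (Suc (Suc n)) = Cons 1 ` C12 (Suc n) \<union> Cons 2 ` C12 n"
proof -
  have "xs \<noteq> []" if "xs \<in> C12 (Suc (Suc n))" for xs
    using that by (auto simp: C12_def)
  then show ?thesis by (force simp: neq_Nil_conv Cons_in_C12_iff)
qed

lemma C12_replicate_1: "{xs \<in> C12 n. set xs \<subseteq> {1}} = {replicate n 1}"
proof -
  have "xs = replicate (sum_list xs) 1" if "set xs \<subseteq> {1}" for xs :: "nat list"
    using that by (induction xs) auto
  then show ?thesis by (auto simp: C12_def sum_list_replicate)
qed

definition count_C12 :: "(nat list \<Rightarrow> bool) \<Rightarrow> nat \<Rightarrow> nat" where
  "count_C12 P n = card {xs \<in> C12 n. P xs}"

lemma count_C12_singleton: "C12 n = {ys} \<Longrightarrow> count_C12 P n = of_bool (P ys)"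
proof -
  assume "C12 n = {ys}"
  moreover have "{xs \<in> {ys}. P xs} = (if P ys then {ys} else {})" by auto
  ultimately show ?thesis by (simp add: count_C12_def)
qed

lemma count_C12_Suc_Suc:
  "count_C12 P (Suc (Suc n)) = count_C12 (\<lambda>xs. P (1 # xs)) (Suc n) + count_C12 (\<lambda>xs. P (2 # xs)) n"
proof -
  let ?A = "{xs \<in> C12 (Suc n). P (1 # xs)}" and ?B = "{xs \<in> C12 n. P (2 # xs)}"
  have "{xs \<in> C12 (Suc (Suc n)). P xs} = Cons 1 ` ?A \<union> Cons 2 ` ?B"
    unfolding C12_Suc_Suc by auto
  moreover have "card (Cons 1 ` ?A \<union> Cons 2 ` ?B) = card (Cons 1 ` ?A) + card (Cons 2 ` ?B)"
    by (rule card_Un_disjoint) (auto simp: finite_C12)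
  ultimately show ?thesis
    unfolding count_C12_def by (simp add: card_image)
qed

lemma count_C12_cong:
  "(\<And>xs. xs \<in> C12 n \<Longrightarrow> P xs \<longleftrightarrow> Q xs) \<Longrightarrow> count_C12 P n = count_C12 Q n"
  unfolding count_C12_def by (metis (mono_tags, lifting) Collect_cong)

lemma count_C12_add_not: "count_C12 P n + count_C12 (\<lambda>xs. \<not> P xs) n = card (C12 n)"
proof -
  have "C12 n = {xs \<in> C12 n. P xs} \<union> {xs \<in> C12 n. \<not> P xs}" by auto
  moreover have "card ({xs \<in> C12 n. P xs} \<union> {xs \<in> C12 n. \<not> P xs}) =
      count_C12 P n + count_C12 (\<lambda>xs. \<not> P xs) n"
    unfolding count_C12_def by (rule card_Un_disjoint) (auto simp: finite_C12)
  ultimately show ?thesis by simp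
qed

lemma water_Cons_1: "set xs \<subseteq> {1, 2} \<Longrightarrow> water (1 # xs) = water xs"
  by (rule water_Cons_lower) auto

lemma water_Cons_2: "set xs \<subseteq> {1, 2} \<Longrightarrow> water (2 # xs) = walled_water xs"
  by (rule water_Cons_upper) auto

lemma walled_water_Cons_2: "set xs \<subseteq> {1, 2} \<Longrightarrow> walled_water (2 # xs) = walled_water xs"
  by (subst walled_water_Cons, subst Max_eqI) auto

lemma walled_water_Cons_1_eq_0_iff:
  assumes "set xs \<subseteq> {1, 2}"
  shows "walled_water (1 # xs) = 0 \<longleftrightarrow> set xs \<subseteq> {1}"
proof
  assume "walled_water (1 # xs) = 0"
  then have "Max (insert 1 (set xs)) - 1 = 0"
    unfolding walled_water_Cons by linarith
  with assms show "set xs \<subseteq> {1}" by (force simp: subset_iff)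
next
  assume "set xs \<subseteq> {1}"
  then show "walled_water (1 # xs) = 0" by (intro walled_water_const[of _ 1]) simp
qed

lemma card_C12_Suc_Suc: "card (C12 (Suc (Suc n))) = card (C12 (Suc n)) + card (C12 n)"
  using count_C12_Suc_Suc[of "\<lambda>_. True"] by (simp add: count_C12_def)

lemma count_C12_walled_dry_Suc_Suc:
  "count_C12 (\<lambda>xs. walled_water xs = 0) (Suc (Suc n)) = count_C12 (\<lambda>xs. walled_water xs = 0) n + 1"
proof -
  have "count_C12 (\<lambda>xs. walled_water (1 # xs) = 0) (Suc n) = count_C12 (\<lambda>xs. set xs \<subseteq> {1}) (Suc n)"
    by (rule count_C12_cong, rule walled_water_Cons_1_eq_0_iff) (simp add: C12_def)
  also have "\<dots> = 1"
    unfolding count_C12_def C12_replicate_1 by simp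
  finally have after_1: "count_C12 (\<lambda>xs. walled_water (1 # xs) = 0) (Suc n) = 1" .
  have after_2: "count_C12 (\<lambda>xs. walled_water (2 # xs) = 0) n = count_C12 (\<lambda>xs. walled_water xs = 0) n"
    by (rule count_C12_cong) (simp add: C12_def walled_water_Cons_2)
  show ?thesis
    unfolding count_C12_Suc_Suc after_1 after_2 by simp
qed

lemma count_C12_wet_Suc_Suc:
  "count_C12 (\<lambda>xs. 0 < water xs) (Suc (Suc n)) =
    count_C12 (\<lambda>xs. 0 < water xs) (Suc n) + count_C12 (\<lambda>xs. 0 < walled_water xs) n"
  unfolding count_C12_Suc_Suc
  by (intro arg_cong2[where f = "(+)"] count_C12_cong; subst water_Cons_1 water_Cons_2)
    (auto simp: C12_def)

definition ogf :: "(nat \<Rightarrow> nat) \<Rightarrow> real fps" where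
  "ogf f = Abs_fps (\<lambda>n. real (f n))"

lemma ogf_C12: "ogf (\<lambda>n. card (C12 n)) * (1 - fps_X - fps_X ^ 2) = 1"
  by (rule fps_eq_Suc_SucI)
    (simp_all add: ogf_def algebra_simps power2_eq_square C12_0 C12_1 card_C12_Suc_Suc)

lemma ogf_walled_dry:
  "ogf (count_C12 (\<lambda>xs. walled_water xs = 0)) * (1 - fps_X ^ 2) * (1 - fps_X) = 1"
proof -
  have "ogf (count_C12 (\<lambda>xs. walled_water xs = 0)) * (1 - fps_X ^ 2) = ogf (\<lambda>_. 1)"
    by (rule fps_eq_Suc_SucI)
      (simp_all add: ogf_def algebra_simps power2_eq_square count_C12_walled_dry_Suc_Suc
        count_C12_singleton[OF C12_0] count_C12_singleton[OF C12_1]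
        walled_water_Cons)
  moreover have "ogf (\<lambda>_. 1) * (1 - fps_X) = 1"
    by (rule fps_eq_Suc_SucI) (simp_all add: ogf_def algebra_simps)
  ultimately show ?thesis by simp
qed

lemma ogf_wet:
  "ogf (count_C12 (\<lambda>xs. 0 < water xs)) * (1 - fps_X) =
    fps_X ^ 2 * (ogf (\<lambda>n. card (C12 n)) - ogf (count_C12 (\<lambda>xs. walled_water xs = 0)))"
proof (rule fps_eq_Suc_SucI)
  fix n
  have "count_C12 (\<lambda>xs. walled_water xs = 0) n + count_C12 (\<lambda>xs. 0 < walled_water xs) n = card (C12 n)"
    using count_C12_add_not[of "\<lambda>xs. walled_water xs = 0"] by simp
  then have "real (count_C12 (\<lambda>xs. 0 < walled_water xs) n) =
      real (card (C12 n)) - real (count_C12 (\<lambda>xs. walled_water xs = 0) n)"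
    by linarith
  then show "(ogf (count_C12 (\<lambda>xs. 0 < water xs)) * (1 - fps_X)) $ Suc (Suc n) =
    (fps_X ^ 2 * (ogf (\<lambda>n. card (C12 n)) - ogf (count_C12 (\<lambda>xs. walled_water xs = 0)))) $ Suc (Suc n)"
    by (simp add: ogf_def algebra_simps power2_eq_square count_C12_wet_Suc_Suc)
qed (simp_all add: ogf_def algebra_simps count_C12_singleton[OF C12_0]
      count_C12_singleton[OF C12_1] water_def)

lemma ogf_wet_times_denominator:
  "ogf (count_C12 (\<lambda>xs. 0 < water xs)) *
    ((1 - fps_X) ^ 2 * (1 - fps_X ^ 2) * (1 - fps_X - fps_X ^ 2)) = fps_X ^ 5"
proof -
  let ?G = "ogf (count_C12 (\<lambda>xs. 0 < water xs))"
    and ?F = "ogf (\<lambda>n. card (C12 n))" and ?Z = "ogf (count_C12 (\<lambda>xs. walled_water xs = 0))"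
  have "?G * ((1 - fps_X) ^ 2 * (1 - fps_X ^ 2) * (1 - fps_X - fps_X ^ 2)) =
      ?G * (1 - fps_X) * ((1 - fps_X ^ 2) * (1 - fps_X) * (1 - fps_X - fps_X ^ 2))"
    by (simp add: power2_eq_square mult_ac)
  also have "\<dots> = fps_X ^ 2 * (?F * (1 - fps_X - fps_X ^ 2) * ((1 - fps_X ^ 2) * (1 - fps_X))
      - ?Z * (1 - fps_X ^ 2) * (1 - fps_X) * (1 - fps_X - fps_X ^ 2))"
    unfolding ogf_wet by (simp add: algebra_simps)
  also have "\<dots> = fps_X ^ 2 * ((1 - fps_X ^ 2) * (1 - fps_X) - (1 - fps_X - fps_X ^ 2))"
    unfolding ogf_C12 ogf_walled_dry by simp
  also have "\<dots> = fps_X ^ 5"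
    by (simp add: algebra_simps power2_eq_square power3_eq_cube numeral_eq_Suc)
  finally show ?thesis .
qed

theorem mainTheorem7:
  shows "Abs_fps (\<lambda>n. (\<Sum>\<^sub>\<infinity>k\<in>{1..}. real (w n k))) =
    fps_X ^ 5 / ((1 - fps_X) ^ 2 * (1 - fps_X ^ 2) * (1 - fps_X - fps_X ^ 2))"
proof -
  let ?D = "(1 - fps_X) ^ 2 * (1 - fps_X ^ 2) * (1 - fps_X - fps_X ^ 2) :: real fps"
  have "(\<Sum>\<^sub>\<infinity>k\<in>{1..}. real (w n k)) = real (count_C12 (\<lambda>xs. 0 < water xs) n)" for n
    unfolding w_def W_def count_C12_def by (simp add: infsum_card_fibres finite_C12 Suc_le_eq)
  then have gf: "Abs_fps (\<lambda>n. (\<Sum>\<^sub>\<infinity>k\<in>{1..}. real (w n k))) = ogf (count_C12 (\<lambda>xs. 0 < water xs))"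
    by (simp add: ogf_def)
  have "?D $ 0 = 1"
    by (simp add: power2_eq_square)
  then have "?D \<noteq> 0"
    by (metis fps_zero_nth zero_neq_one)
  then show ?thesis
    unfolding gf ogf_wet_times_denominator[symmetric] by (rule fps_divide_times_eq[symmetric])
qed

end
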